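(* Fix $d\ge 11$, $\mu=0.75$, $\delta=0.1$, $\epsilon=0.01$. Let $w,w'\in\mathbb{R}^2$ with $\rho(w,w')=1$, and for $C>0$ let $W=B_2(w,\epsilon)\times B_{d-2}(0,C)$ and $W'=B_2(w',\epsilon)\times B_{d-2}(0,C)$. There exists $C'=C'(d)<\infty$ such that if $C\ge C'$, then for all $x\in W$ and all $r\in[\mu-\delta,\mu+\delta]$, the set $$S=W'\cap\big(B(x,r+\mu+\delta)\setminus B(x,r+\mu-\delta)\big)$$ satisfies $$\mathcal{L}S\ge\frac{\omega_2\,\omega_{d-2}\,\epsilon^2}{3}\Big(1.2^{\frac{d-2}{2}}-1\Big).$$
   Context: $\rho$ is Euclidean distance; $B_k(x,r)$ is the open Euclidean ball in $\mathbb{R}^k$, and $B(x,r)=B_d(x,r)$; $\mathcal{L}$ is Lebesgue measure on $\mathbb{R}^d$; $\omega_k=\mathcal{L}B_k(0,1)$ is the volume of the unit ball in $\mathbb{R}^k$. Points of $\mathbb{R}^d$ are identified with $\mathbb{R}^2\times\mathbb{R}^{d-2}$. *)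

theory Defs
  imports "HOL-Analysis.Analysis"
begin

definition unit_ball_volume :: "'a::euclidean_space itself \<Rightarrow> real" where
  "unit_ball_volume _ = measure lebesgue (ball (0::'a) 1)"

end

theory Submission
  imports Defs
begin

(* Write points as (y1, y2) with y1 in R^2 and y2 in R^(d-2). For y1 in B(w', 0.01) the
   distance |x1 - y1| lies in (0.98, 1.02), so |x - y| lies in the required range as soon as
   |x2 - y2| lies between two radii p < q depending linearly on r. Hence S contains
   B(w', 0.01) x T, where T is the half of the shell {p <= |v| < q} facing the origin,
   translated to x2; moving its centre by 0.002 towards the origin keeps T inside B(0, C)
   once C >= 1002. By the symmetry v -> -v, T has at least half the volume
   omega_(d-2) (q^(d-2) - p^(d-2)) of the full shell, and q >= sqrt 1.2 * max p 1 gives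
   q^(d-2) - p^(d-2) >= 1.2^((d-2)/2) - 1. *)

definition half_shell :: "'a::real_inner \<Rightarrow> real \<Rightarrow> real \<Rightarrow> 'a set" where
  "half_shell u p q = {v. p \<le> norm v \<and> norm v < q \<and> inner u v \<le> 0}"

lemma translated_half_shell_in_borel:
  "(+) c ` half_shell (u::'a::euclidean_space) p q \<in> sets borel"
proof -
  have "(+) c ` half_shell u p q = {y. p \<le> norm (y - c) \<and> norm (y - c) < q \<and> inner u (y - c) \<le> 0}"
    by (force simp: half_shell_def)
  then show ?thesis
    by simp
qed

lemma uminus_half_shell: "uminus ` half_shell u p q = half_shell (- u) p q"
  by (force simp: half_shell_def image_iff intro: exI[of _ "- v" for v])

lemma half_shell_Un_uminus:
  "half_shell u p q \<union> half_shell (- u) p q = ball 0 q - ball 0 p"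
  by (auto simp: half_shell_def)

lemma measure_lebesgue_ball:
  fixes c :: "'a::euclidean_space"
  assumes "0 \<le> s"
  shows "measure lebesgue (ball c s) = s ^ DIM('a) * unit_ball_volume TYPE('a)"
  using content_ball_conv_unit_ball[OF assms, of c]
  by (simp add: unit_ball_volume_def measure_completion)

lemma unit_ball_volume_nonneg: "0 \<le> unit_ball_volume TYPE('a::euclidean_space)"
  by (simp add: unit_ball_volume_def)

lemma measure_lebesgue_Times:
  fixes A :: "'a::euclidean_space set" and B :: "'b::euclidean_space set"
  assumes "A \<in> sets borel" "B \<in> sets borel"
  shows "measure lebesgue (A \<times> B) = measure lebesgue A * measure lebesgue B"
proof -
  have "A \<times> B \<in> sets borel"
    using assms by (simp add: borel_prod[symmetric])
  then have "measure lebesgue (A \<times> B) = measure (lborel \<Otimes>\<^sub>M lborel) (A \<times> B)"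
    by (simp add: measure_completion lborel_prod)
  also have "\<dots> = measure lborel A * measure lborel B"
    unfolding measure_def using assms
    by (simp add: lborel.emeasure_pair_measure_Times enn2real_mult)
  finally show ?thesis
    using assms by (simp add: measure_completion)
qed

lemma measure_half_shell_ge:
  fixes u :: "'a::euclidean_space"
  assumes "0 \<le> p" "p \<le> q"
  shows "(q ^ DIM('a) - p ^ DIM('a)) * unit_ball_volume TYPE('a) / 2
           \<le> measure lebesgue (half_shell u p q)"
proof -
  have mirror: "measure lebesgue (half_shell (- u) p q) = measure lebesgue (half_shell u p q)"
    using measure_lebesgue_affine[of "-1" 0 "half_shell u p q"]
    by (simp add: uminus_half_shell[symmetric])
  have "measure lebesgue (ball (0::'a) q - ball 0 p)
          = measure lebesgue (ball (0::'a) q) - measure lebesgue (ball (0::'a) p)"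
    using assms emeasure_lborel_ball_finite[of "0::'a" q] by (intro measure_Diff) auto
  also have "\<dots> = (q ^ DIM('a) - p ^ DIM('a)) * unit_ball_volume TYPE('a)"
    using assms measure_lebesgue_ball[of p "0::'a"] measure_lebesgue_ball[of q "0::'a"]
    by (simp add: left_diff_distrib)
  finally have "(q ^ DIM('a) - p ^ DIM('a)) * unit_ball_volume TYPE('a)
      \<le> measure lebesgue (half_shell u p q) + measure lebesgue (half_shell (- u) p q)"
    using measure_Un_le[of "half_shell u p q" lebesgue "half_shell (- u) p q"]
    by (simp add: half_shell_Un_uminus translated_half_shell_in_borel[of 0, simplified])
  then show ?thesis
    by (simp add: mirror)
qed

lemma power_diff_power_ge:
  fixes p q s :: real
  assumes "0 \<le> p" "1 \<le> s" "s \<le> q" "s * p \<le> q"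
  shows "s ^ n - 1 \<le> q ^ n - p ^ n"
proof (cases "p \<le> 1")
  case True
  have "s ^ n \<le> q ^ n" using assms by (intro power_mono) auto
  moreover have "p ^ n \<le> 1" using True assms by (intro power_le_one) auto
  ultimately show ?thesis by linarith
next
  case False
  have "s ^ n * p ^ n \<le> q ^ n"
    using assms power_mono[OF assms(4), of n] by (simp add: power_mult_distrib)
  moreover have "(s ^ n - 1) * 1 \<le> (s ^ n - 1) * p ^ n"
    using False assms by (intro mult_left_mono one_le_power) auto
  ultimately show ?thesis by (simp add: algebra_simps)
qed

lemma dist_near_unit_distance:
  fixes w w' x y :: "'a::metric_space"
  assumes "dist w w' = 1" "dist w x < e" "dist w' y < e"
  shows "1 - 2 * e < dist x y" "dist x y < 1 + 2 * e"
  using dist_triangle[of w w' x] dist_triangle[of x w' y] dist_triangle[of x y w]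
    dist_triangle[of w y w'] assms
  by (simp_all add: dist_commute)

lemma norm_add_shift_toward_origin_less:
  fixes x v :: "'a::real_inner"
  assumes x: "norm x < C" and v: "inner x v \<le> 0"
    and d: "norm (v - h *\<^sub>R sgn x) < R" and h: "0 \<le> h" and R: "R\<^sup>2 \<le> 2 * h * (C - R)"
  shows "norm (x + (v - h *\<^sub>R sgn x)) < C"
proof (cases "norm x < C - R")
  case True
  then show ?thesis
    using norm_triangle_ineq[of x "v - h *\<^sub>R sgn x"] d by linarith
next
  case False
  define e where "e = v - h *\<^sub>R sgn x"
  have "0 < R"
    using d le_less_trans[OF norm_ge_zero] by blast
  then have "0 < 2 * h * (C - R)"
    using R by (metis less_le_trans zero_less_power)
  then have "0 < C - R"
    using h by (simp add: zero_less_mult_iff)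
  with False have "x \<noteq> 0" by auto
  have "inner x e = inner x v - h * norm x"
    using \<open>x \<noteq> 0\<close> by (simp add: e_def inner_diff_right sgn_div_norm dot_square_norm power2_eq_square)
  moreover have "h * (C - R) \<le> h * norm x"
    using False h by (intro mult_left_mono) auto
  ultimately have xe: "2 * inner x e \<le> - 2 * h * (C - R)"
    using v by linarith
  have "(norm e)\<^sup>2 < R\<^sup>2"
    using d by (simp add: e_def power_strict_mono)
  have "(norm (x + e))\<^sup>2 = (norm x)\<^sup>2 + 2 * inner x e + (norm e)\<^sup>2"
    by (simp add: power2_norm_eq_inner inner_add_left inner_add_right inner_commute[of e x])
  also have "\<dots> < (norm x)\<^sup>2"
    using xe \<open>(norm e)\<^sup>2 < R\<^sup>2\<close> R by linarith
  finally have "norm (x + e) < norm x"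
    using power2_less_imp_less norm_ge_zero by blast
  then show ?thesis
    using x by (simp add: e_def)
qed

(* With a margin of 0.002 for the shifted centre, these lines lie inside the exact radii
   sqrt ((r + 0.65)^2 - 0.98^2) and sqrt ((r + 0.85)^2 - 1.02^2) for r in [0.65, 0.85],
   and their ratio stays above sqrt 1.2. *)
definition inner_radius :: "real \<Rightarrow> real" where
  "inner_radius r = 0.86 + 1.53 * (r - 0.65)"

definition outer_radius :: "real \<Rightarrow> real" where
  "outer_radius r = 1.0977 + 1.3 * (r - 0.65)"

lemma sqrt_sum_squares_in_annulus:
  fixes r a b :: real
  assumes r: "0.65 \<le> r" "r \<le> 0.85" and a: "0.98 < a" "a < 1.02"
    and b: "inner_radius r - 0.002 \<le> b" "b < outer_radius r + 0.002"
  shows "r + 0.65 \<le> sqrt (a\<^sup>2 + b\<^sup>2)" "sqrt (a\<^sup>2 + b\<^sup>2) < r + 0.85"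
proof -
  define t where "t = r - 0.65"
  \<comment> \<open>kept opaque, so that the final comparison is linear in \<open>t\<close> and \<open>t2\<close>\<close>
  define t2 where "t2 = t * t"
  have t: "0 \<le> t" "0 \<le> t2" "t2 \<le> 0.2 * t"
    using r mult_right_mono[of t "0.2" t] by (auto simp: t_def t2_def)
  have "0.98\<^sup>2 < a\<^sup>2" "a\<^sup>2 < 1.02\<^sup>2"
    using a by (auto intro!: power_strict_mono)
  moreover have "0 \<le> inner_radius r - 0.002"
    using r by (simp add: inner_radius_def)
  then have "(inner_radius r - 0.002)\<^sup>2 \<le> b\<^sup>2" "b\<^sup>2 < (outer_radius r + 0.002)\<^sup>2"
    using b by (auto intro!: power_mono power_strict_mono)
  moreover have "(inner_radius r - 0.002)\<^sup>2 = 0.736164 + 2.62548 * t + 2.3409 * t2"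
    "(r + 0.65)\<^sup>2 = 0.98\<^sup>2 + 0.7296 + 2.6 * t + t2"
    "(outer_radius r + 0.002)\<^sup>2 = 1.20934009 + 2.85922 * t + 1.69 * t2"
    "(r + 0.85)\<^sup>2 = 1.02\<^sup>2 + 1.2096 + 3 * t + t2"
    by (simp_all add: t2_def t_def inner_radius_def outer_radius_def power2_eq_square field_simps)
  ultimately have "(r + 0.65)\<^sup>2 \<le> a\<^sup>2 + b\<^sup>2" "a\<^sup>2 + b\<^sup>2 < (r + 0.85)\<^sup>2"
    using t by (simp_all add: field_simps)
  then show "r + 0.65 \<le> sqrt (a\<^sup>2 + b\<^sup>2)" "sqrt (a\<^sup>2 + b\<^sup>2) < r + 0.85"
    using r by (auto intro: real_le_rsqrt real_less_lsqrt)
qed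

lemma outer_inner_radius_power_diff_ge:
  assumes "0.65 \<le> r" "r \<le> 0.85"
  shows "1.2 powr (real n / 2) - 1 \<le> outer_radius r ^ n - inner_radius r ^ n"
proof -
  have "sqrt 1.2 \<le> (1.0955::real)"
    by (rule real_le_lsqrt) (simp_all add: power2_eq_square)
  then have "sqrt 1.2 * inner_radius r \<le> 1.0955 * inner_radius r"
    using assms by (intro mult_right_mono) (simp_all add: inner_radius_def)
  also have "\<dots> \<le> outer_radius r"
    using assms by (simp add: inner_radius_def outer_radius_def field_simps)
  finally have "sqrt 1.2 * inner_radius r \<le> outer_radius r" .
  moreover have "sqrt 1.2 \<le> outer_radius r"
    using assms \<open>sqrt 1.2 \<le> 1.0955\<close> by (simp add: outer_radius_def field_simps)
  ultimately have "sqrt 1.2 ^ n - 1 \<le> outer_radius r ^ n - inner_radius r ^ n"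
    using assms by (intro power_diff_power_ge) (simp_all add: inner_radius_def)
  moreover have "(1.2::real) powr (real n / 2) = sqrt 1.2 ^ n"
    by (simp add: powr_half_sqrt_powr powr_realpow real_sqrt_power)
  ultimately show ?thesis
    by simp
qed

lemma translated_half_shell_subset_cylinder_Int_annulus:
  fixes w w' x1 :: "'b::metric_space" and x2 :: "'a::real_inner"
  assumes w: "dist w w' = 1" and x1: "x1 \<in> ball w 0.01" and x2: "x2 \<in> ball 0 C"
    and C: "1002 \<le> C" and r: "0.65 \<le> r" "r \<le> 0.85"
  shows "ball w' 0.01 \<times> (+) (x2 - 0.002 *\<^sub>R sgn x2) ` half_shell x2 (inner_radius r) (outer_radius r)
           \<subseteq> (ball w' 0.01 \<times> ball 0 C) \<inter> (ball (x1, x2) (r + 0.85) - ball (x1, x2) (r + 0.65))"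
proof clarify
  fix y1 v
  assume y1: "y1 \<in> ball w' 0.01" and v: "v \<in> half_shell x2 (inner_radius r) (outer_radius r)"
  define e where "e = v - 0.002 *\<^sub>R sgn x2"
  have "norm (0.002 *\<^sub>R sgn x2) \<le> 0.002"
    by (simp add: norm_sgn)
  then have e: "inner_radius r - 0.002 \<le> norm e" "norm e < outer_radius r + 0.002"
    using v norm_triangle_ineq2[of v "0.002 *\<^sub>R sgn x2"] norm_triangle_ineq4[of v "0.002 *\<^sub>R sgn x2"]
    by (auto simp: e_def half_shell_def)
  have "0.98 < dist x1 y1" "dist x1 y1 < 1.02"
    using dist_near_unit_distance[OF w, of x1 "0.01" y1] x1 y1 by simp_all
  then have "r + 0.65 \<le> dist (x1, x2) (y1, x2 + e)" "dist (x1, x2) (y1, x2 + e) < r + 0.85"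
    using sqrt_sum_squares_in_annulus[OF r _ _ e] by (simp_all add: dist_Pair_Pair dist_norm)
  moreover have "norm (x2 + e) < C"
    unfolding e_def
  proof (rule norm_add_shift_toward_origin_less)
    show "norm (v - 0.002 *\<^sub>R sgn x2) < 2"
      using e r by (simp add: e_def outer_radius_def field_simps)
  qed (use x2 v C in \<open>auto simp: half_shell_def\<close>)
  moreover have "x2 + e = x2 - 0.002 *\<^sub>R sgn x2 + v"
    by (simp add: e_def)
  ultimately show "(y1, x2 - 0.002 *\<^sub>R sgn x2 + v)
      \<in> (ball w' 0.01 \<times> ball 0 C) \<inter> (ball (x1, x2) (r + 0.85) - ball (x1, x2) (r + 0.65))"
    using y1 by (simp add: dist_commute)
qed

lemma measure_cylinder_Int_annulus_ge:
  fixes w w' :: "'b::euclidean_space" and x :: "'b \<times> 'a::euclidean_space"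
  assumes w: "dist w w' = 1" and x: "x \<in> ball w 0.01 \<times> ball 0 C"
    and C: "1002 \<le> C" and r: "0.65 \<le> r" "r \<le> 0.85"
  shows "0.01 ^ DIM('b) * unit_ball_volume TYPE('b) * unit_ball_volume TYPE('a)
           * (1.2 powr (real DIM('a) / 2) - 1) / 2
         \<le> measure lebesgue ((ball w' 0.01 \<times> ball 0 C) \<inter> (ball x (r + 0.85) - ball x (r + 0.65)))"
    (is "_ \<le> measure lebesgue ?S")
proof -
  obtain x1 x2 where x12: "x = (x1, x2)"
    by force
  define H where "H = half_shell x2 (inner_radius r) (outer_radius r)"
  define c where "c = x2 - 0.002 *\<^sub>R sgn x2"
  have "(1.2 powr (real DIM('a) / 2) - 1) * unit_ball_volume TYPE('a) / 2
      \<le> (outer_radius r ^ DIM('a) - inner_radius r ^ DIM('a)) * unit_ball_volume TYPE('a) / 2"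
    using outer_inner_radius_power_diff_ge[OF r] unit_ball_volume_nonneg
    by (intro divide_right_mono mult_right_mono) auto
  also have "\<dots> \<le> measure lebesgue H"
    unfolding H_def using r
    by (intro measure_half_shell_ge) (simp_all add: inner_radius_def outer_radius_def field_simps)
  finally have "0.01 ^ DIM('b) * unit_ball_volume TYPE('b)
      * ((1.2 powr (real DIM('a) / 2) - 1) * unit_ball_volume TYPE('a) / 2)
      \<le> 0.01 ^ DIM('b) * unit_ball_volume TYPE('b) * measure lebesgue H"
    using unit_ball_volume_nonneg[where 'a='b] by (intro mult_left_mono) auto
  also have "\<dots> = measure lebesgue (ball w' 0.01 \<times> (+) c ` H)"
    using measure_lebesgue_ball[of "0.01" w']
    by (simp add: measure_lebesgue_Times translated_half_shell_in_borel measure_translation H_def)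
  also have "\<dots> \<le> measure lebesgue ?S"
  proof (rule measure_mono_fmeasurable)
    show "ball w' 0.01 \<times> (+) c ` H \<subseteq> ?S"
      using x unfolding x12 H_def c_def
      by (intro translated_half_shell_subset_cylinder_Int_annulus[OF w _ _ C r]) auto
    show "ball w' 0.01 \<times> (+) c ` H \<in> sets lebesgue"
      by (simp add: borel_prod[symmetric] translated_half_shell_in_borel H_def)
    show "?S \<in> lmeasurable"
      by (rule bounded_set_imp_lmeasurable[OF bounded_subset[OF bounded_ball[of x "r + 0.85"]]])
        (auto intro!: sets.Int sets.Diff borel_open open_Times lborelD)
  qed
  finally show ?thesis
    by (simp add: ac_simps)
qed

theorem mainTheorem7:
  fixes TYPE_Rdm2 :: "'a::euclidean_space itself"
  assumes "DIM('a) + 2 \<ge> 11"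
  shows "\<exists>C'::real. \<forall>C::real. \<forall>w w' :: real^2. \<forall>(x :: (real^2) \<times> 'a). \<forall>r::real.
     (C > 0 \<and> C \<ge> C' \<and> dist w w' = 1
      \<and> x \<in> ball w 0.01 \<times> ball (0::'a) C
      \<and> r \<in> {0.75 - 0.1 .. 0.75 + 0.1}) \<longrightarrow>
     measure lebesgue ((ball w' 0.01 \<times> ball (0::'a) C) \<inter>
                       (ball x (r + 0.75 + 0.1) - ball x (r + 0.75 - 0.1)))
       \<ge> unit_ball_volume TYPE(real^2) * unit_ball_volume TYPE('a) * 0.01^2 / 3
          * (1.2 powr (real DIM('a) / 2) - 1)"
proof (intro exI[of _ 1002] allI impI, elim conjE)
  fix C :: real and w w' :: "real^2" and x :: "(real^2) \<times> 'a" and r :: real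
  assume C: "C \<ge> 1002" and w: "dist w w' = 1" and x: "x \<in> ball w 0.01 \<times> ball 0 C"
    and r: "r \<in> {0.75 - 0.1 .. 0.75 + 0.1}"
  define V where "V = unit_ball_volume TYPE(real^2) * unit_ball_volume TYPE('a)
    * (1.2 powr (real DIM('a) / 2) - 1)"
  have "0 \<le> V"
    using unit_ball_volume_nonneg[where 'a="real^2"] unit_ball_volume_nonneg[where 'a='a]
    by (simp add: V_def ge_one_powr_ge_zero)
  have radii: "r + 0.75 + 0.1 = r + 0.85" "r + 0.75 - 0.1 = r + 0.65"
    by simp_all
  have "unit_ball_volume TYPE(real^2) * unit_ball_volume TYPE('a) * 0.01^2 / 3
      * (1.2 powr (real DIM('a) / 2) - 1) = 0.01^2 * V / 3"
    by (simp add: V_def)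
  also have "\<dots> \<le> 0.01^2 * V / 2"
    using \<open>0 \<le> V\<close> by simp
  also have "\<dots> \<le> measure lebesgue ((ball w' 0.01 \<times> ball 0 C) \<inter>
                       (ball x (r + 0.75 + 0.1) - ball x (r + 0.75 - 0.1)))"
    using measure_cylinder_Int_annulus_ge[OF w x C] r unfolding radii V_def by (simp add: mult.assoc)
  finally show "measure lebesgue ((ball w' 0.01 \<times> ball 0 C) \<inter>
                       (ball x (r + 0.75 + 0.1) - ball x (r + 0.75 - 0.1)))
       \<ge> unit_ball_volume TYPE(real^2) * unit_ball_volume TYPE('a) * 0.01^2 / 3
          * (1.2 powr (real DIM('a) / 2) - 1)" .
qed

end
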